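(* Let $m\ge 1$ be an integer and let $p,p'\in[0,1]$ satisfy $|p-p'|<1$; put $q=1-p$, $q'=1-p'$. Let $\{S_n:n\ge 0\}$ be the Markov chain on $\mathbb{Z}$ with $S_0=0$ and with $S_{n+1}-S_n\in\{-1,+1\}$, where \[ P(S_{n+1}-S_n=1\mid S_0,\dots,S_n)=p'\,1_{[S_n\in m\mathbb{Z}]}+p\,1_{[S_n\notin m\mathbb{Z}]} . \] Let $p^\ast_m$ denote the probability that this walk, started at $0$, reaches $m$ before it reaches $-m$ (equivalently, the constant probability of an up-step of the embedded walk $\{J_n\}$ on $m\mathbb{Z}$ described below). Then \[ p^\ast_m=\frac{p'p^{m-1}}{p'p^{m-1}+q'q^{m-1}} . \]
   Context: The walk in the claim is called the Parrondo game $G(m,p,p')$. Its embedded walk on the lattice $m\mathbb{Z}$ is defined via the times $T_0=0$, $T_1=\min\{n\ge 0: S_n\in m\mathbb{Z}\}$, $T_{k+1}=\min\{n>T_k: S_n-S_{T_k}=\pm m\}$ (minimum of the empty set is $+\infty$), and $J_n=m^{-1}S_{T_{n+1}}$; $\{J_n\}$ is a simple random walk on $\mathbb{Z}$ whose probability of a $+1$ step, $P(J_{n+1}-J_n=1\mid J_n)$, is the constant $p^\ast_m$. *)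

theory Defs
  imports "HOL-Probability.Probability"
begin

definition up_prob :: "nat \<Rightarrow> real \<Rightarrow> real \<Rightarrow> int \<Rightarrow> real" where
  "up_prob m p p' x = (if int m dvd x then p' else p)"

text \<open>Law of the path (S_0,...,S_n), stored as a reversed list
  (head = current position S_n, last = S_0 = 0).\<close>
fun walk_path :: "nat \<Rightarrow> real \<Rightarrow> real \<Rightarrow> nat \<Rightarrow> int list pmf" where
  "walk_path m p p' 0 = return_pmf [0]"
| "walk_path m p p' (Suc n) =
     bind_pmf (walk_path m p p' n)
       (\<lambda>xs. map_pmf (\<lambda>b. (if b then hd xs + 1 else hd xs - 1) # xs)
               (bernoulli_pmf (up_prob m p p' (hd xs))))"

definition reaches_m_first :: "nat \<Rightarrow> int list \<Rightarrow> bool" where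
  "reaches_m_first m ys \<longleftrightarrow>
     (\<exists>k < length ys. ys ! k = int m \<and> (\<forall>j<k. ys ! j \<noteq> - int m))"

text \<open>p*_m: probability that the walk started at 0 reaches m before -m,
  i.e. the probability of the increasing union over n of the events
  "reaches m before -m within n steps".\<close>
definition pstar :: "nat \<Rightarrow> real \<Rightarrow> real \<Rightarrow> real" where
  "pstar m p p' =
     (SUP n. measure_pmf.prob (walk_path m p p' n) {xs. reaches_m_first m (rev xs)})"

end

theory Submission
  imports Defs
begin

text \<open>Stop the walk when it leaves (-m, m), at time \<tau>; p*_m is the limit of the probability
  that the stopped walk sits at m at time n. The scale function V of the walk, with V(-m) = 0,
  is harmonic inside (-m, m), so E V(S(min n \<tau>)) = V(0) for all n. Its increments are
  geometric with ratio (1 - p)/p away from 0 and change by the factor (1 - p')/p' across 0,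
  which makes V(0)/V(m) the claimed quotient. Since |p - p'| < 1, either both up-probabilities
  or both down-probabilities are positive, so from anywhere in (-m, m) the walk leaves within
  2m steps with probability bounded below; the stopped walk is therefore absorbed almost surely
  in the limit, and p*_m = V(0)/V(m).\<close>

fun kernel_pow :: "('a \<Rightarrow> 'a pmf) \<Rightarrow> nat \<Rightarrow> 'a \<Rightarrow> 'a pmf" where
  "kernel_pow K 0 s = return_pmf s"
| "kernel_pow K (Suc n) s = bind_pmf (kernel_pow K n s) K"

definition stopped_kernel :: "'a set \<Rightarrow> ('a \<Rightarrow> 'a pmf) \<Rightarrow> 'a \<Rightarrow> 'a pmf" where
  "stopped_kernel R K s = (if s \<in> R then K s else return_pmf s)"

lemma kernel_pow_add: "kernel_pow K (n + k) s = bind_pmf (kernel_pow K n s) (kernel_pow K k)"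
  by (induction k) (simp_all add: bind_return_pmf' bind_assoc_pmf)

lemma kernel_pow_Suc': "kernel_pow K (Suc n) s = bind_pmf (K s) (kernel_pow K n)"
  using kernel_pow_add[of K 1 n s] by (simp add: bind_return_pmf)

lemma kernel_pow_stopped_outside:
  "s \<notin> R \<Longrightarrow> kernel_pow (stopped_kernel R K) n s = return_pmf s"
  by (induction n) (simp_all add: stopped_kernel_def bind_return_pmf)

lemma set_kernel_pow_subset:
  assumes "\<And>s. s \<in> I \<Longrightarrow> set_pmf (K s) \<subseteq> I" and "s \<in> I"
  shows "set_pmf (kernel_pow K n s) \<subseteq> I"
  using assms by (induction n) auto

lemma integrable_measure_pmf_bounded:
  fixes f :: "'a \<Rightarrow> real"
  assumes "\<And>x. \<bar>f x\<bar> \<le> B"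
  shows "integrable (measure_pmf M) f"
  by (rule measure_pmf.integrable_const_bound[where B=B]) (simp_all add: assms)

lemma integral_bind_pmf_bounded:
  fixes f :: "'b \<Rightarrow> real"
  assumes "\<And>x. \<bar>f x\<bar> \<le> B"
  shows "(\<integral>x. f x \<partial>bind_pmf M N) = (\<integral>x. (\<integral>y. f y \<partial>N x) \<partial>M)"
  unfolding measure_pmf_bind
  by (rule integral_bind[where K="count_space UNIV" and B=B and B'=1])
     (use assms measurable_measure_pmf[of N] in \<open>auto simp: measure_pmf.emeasure_space_1\<close>)

lemma prob_bind_pmf:
  "measure_pmf.prob (bind_pmf M N) A = (\<integral>x. measure_pmf.prob (N x) A \<partial>M)"
  using integral_bind_pmf_bounded[of "indicator A" 1 M N] by simp

lemma pmf_mult_prob_le_prob_bind_pmf: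
  "pmf M t * measure_pmf.prob (N t) A \<le> measure_pmf.prob (bind_pmf M N) A"
proof -
  have "pmf M t * measure_pmf.prob (N t) A =
      (\<integral>x. measure_pmf.prob (N t) A * indicator {t} x \<partial>M)"
    by (simp add: measure_pmf_single)
  also have "\<dots> \<le> (\<integral>x. measure_pmf.prob (N x) A \<partial>M)"
    by (rule integral_mono[OF integrable_measure_pmf_bounded[where B=1]
          integrable_measure_pmf_bounded[where B=1]]) (simp_all add: indicator_def)
  finally show ?thesis by (simp only: prob_bind_pmf)
qed

lemma integral_kernel_pow_stopped_harmonic:
  fixes f :: "'a \<Rightarrow> real" and K :: "'a \<Rightarrow> 'a pmf"
  assumes bounded: "\<And>s. \<bar>f s\<bar> \<le> B"
    and harmonic: "\<And>s. s \<in> R \<Longrightarrow> (\<integral>t. f t \<partial>K s) = f s"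
  shows "(\<integral>t. f t \<partial>kernel_pow (stopped_kernel R K) n s) = f s"
proof (induction n)
  case (Suc n)
  have "(\<integral>t. f t \<partial>stopped_kernel R K s') = f s'" for s'
    using harmonic by (simp add: stopped_kernel_def)
  then show ?case using Suc by (simp add: integral_bind_pmf_bounded[OF bounded])
qed simp

lemma prob_kernel_pow_stopped_leave_ge:
  assumes c: "0 \<le> c" "c \<le> 1"
    and progress: "\<And>s. s \<in> R \<Longrightarrow> \<exists>t. c \<le> pmf (K s) t \<and> (t \<in> R \<longrightarrow> \<phi> t < \<phi> s)"
  shows "\<phi> s < k \<Longrightarrow> c ^ k \<le> measure_pmf.prob (kernel_pow (stopped_kernel R K) k s) (- R)"
proof (induction k arbitrary: s)
  case (Suc k)
  let ?P = "kernel_pow (stopped_kernel R K)"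
  show ?case
  proof (cases "s \<in> R")
    case False
    then show ?thesis
      using c power_le_one[of c "Suc k"] by (subst kernel_pow_stopped_outside) simp_all
  next
    case True
    then obtain t where t: "c \<le> pmf (K s) t" "t \<in> R \<longrightarrow> \<phi> t < \<phi> s"
      using progress by blast
    have "c ^ k \<le> measure_pmf.prob (?P k t) (- R)"
    proof (cases "t \<in> R")
      case True
      then show ?thesis using Suc t(2) by simp
    next
      case False
      then show ?thesis using c by (subst kernel_pow_stopped_outside) (simp_all add: power_le_one)
    qed
    then have "c ^ Suc k \<le> pmf (K s) t * measure_pmf.prob (?P k t) (- R)"
      using c t(1) by (simp add: mult_mono)
    also have "\<dots> \<le> measure_pmf.prob (?P (Suc k) s) (- R)"
      unfolding kernel_pow_Suc' using True
      by (simp add: stopped_kernel_def pmf_mult_prob_le_prob_bind_pmf)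
    finally show ?thesis .
  qed
qed simp

lemma prob_kernel_pow_stopped_decay:
  assumes "d \<le> 1"
    and leave: "\<And>s. s \<in> R \<Longrightarrow> d \<le> measure_pmf.prob (kernel_pow (stopped_kernel R K) k s) (- R)"
  shows "measure_pmf.prob (kernel_pow (stopped_kernel R K) (j * k) s) R \<le> (1 - d) ^ j"
proof (induction j)
  case (Suc j)
  let ?P = "kernel_pow (stopped_kernel R K)"
  have step: "measure_pmf.prob (?P k s') R \<le> (1 - d) * indicator R s'" for s'
  proof (cases "s' \<in> R")
    case True
    have "UNIV - R = - R" by auto
    then show ?thesis
      using leave[OF True] measure_pmf.prob_compl[of R "?P k s'"] True by simp
  next
    case False
    then show ?thesis by (simp add: kernel_pow_stopped_outside)
  qed
  have "measure_pmf.prob (?P (Suc j * k) s) R = (\<integral>s'. measure_pmf.prob (?P k s') R \<partial>?P (j * k) s)"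
    unfolding mult_Suc add.commute[of k] kernel_pow_add prob_bind_pmf ..
  also have "\<dots> \<le> (\<integral>s'. (1 - d) * indicator R s' \<partial>?P (j * k) s)"
    by (rule integral_mono[OF integrable_measure_pmf_bounded[where B=1]
          integrable_measure_pmf_bounded[where B="\<bar>1 - d\<bar>"] step])
       (simp_all add: indicator_def)
  also have "\<dots> = (1 - d) * measure_pmf.prob (?P (j * k) s) R"
    by simp
  also have "\<dots> \<le> (1 - d) * (1 - d) ^ j"
    using Suc \<open>d \<le> 1\<close> by (simp add: mult_left_mono)
  finally show ?case by simp
qed simp

lemma kernel_pow_stopped_leaves_eventually:
  assumes "0 < d" "d \<le> 1" "0 < e"
    and leave: "\<And>s. s \<in> R \<Longrightarrow> d \<le> measure_pmf.prob (kernel_pow (stopped_kernel R K) k s) (- R)"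
  obtains n where "measure_pmf.prob (kernel_pow (stopped_kernel R K) n s) R < e"
proof -
  obtain j where "(1 - d) ^ j < e"
    using real_arch_pow_inv[OF \<open>0 < e\<close>, of "1 - d"] assms(1,2) by auto
  moreover have "measure_pmf.prob (kernel_pow (stopped_kernel R K) (j * k) s) R \<le> (1 - d) ^ j"
    by (rule prob_kernel_pow_stopped_decay) (use assms in auto)
  ultimately show thesis
    by (intro that[of "j * k"]) linarith
qed

definition parrondo_step :: "nat \<Rightarrow> real \<Rightarrow> real \<Rightarrow> int \<Rightarrow> int pmf" where
  "parrondo_step m p p' x = map_pmf (\<lambda>b. if b then x + 1 else x - 1) (bernoulli_pmf (up_prob m p p' x))"

definition stopped_walk :: "nat \<Rightarrow> real \<Rightarrow> real \<Rightarrow> nat \<Rightarrow> int pmf" where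
  "stopped_walk m p p' n =
     kernel_pow (stopped_kernel {- int m<..<int m} (parrondo_step m p p')) n 0"

text \<open>On a reversed path of the walk, this is the position at the current time of the walk
  stopped on leaving (-m, m): before the exit the head stays inside (-m, m).\<close>

definition stopped_position :: "nat \<Rightarrow> int list \<Rightarrow> int" where
  "stopped_position m xs =
     (if reaches_m_first m (rev xs) then int m else if - int m \<in> set xs then - int m else hd xs)"

lemma walk_path_Suc':
  "walk_path m p p' (Suc n) =
     bind_pmf (walk_path m p p' n) (\<lambda>xs. map_pmf (\<lambda>y. y # xs) (parrondo_step m p p' (hd xs)))"
  by (simp add: parrondo_step_def map_pmf_comp)

lemma reaches_m_first_snoc:
  "reaches_m_first m (ys @ [y]) \<longleftrightarrow> reaches_m_first m ys \<or> (y = int m \<and> - int m \<notin> set ys)"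
proof -
  have prefix: "(ys @ [y]) ! j = ys ! j" if "j < length ys" for j
    using that by (simp add: nth_append)
  have "reaches_m_first m (ys @ [y]) \<longleftrightarrow>
      (\<exists>k<length ys. (ys @ [y]) ! k = int m \<and> (\<forall>j<k. (ys @ [y]) ! j \<noteq> - int m))
      \<or> (y = int m \<and> (\<forall>j<length ys. ys ! j \<noteq> - int m))"
    unfolding reaches_m_first_def by (auto simp: less_Suc_eq nth_append)
  also have "\<dots> \<longleftrightarrow> reaches_m_first m ys \<or> (y = int m \<and> - int m \<notin> set ys)"
    unfolding reaches_m_first_def in_set_conv_nth using prefix by auto
  finally show ?thesis .
qed

lemma stopped_position_Cons:
  "stopped_position m (y # xs) =
     (if reaches_m_first m (rev xs) \<or> - int m \<in> set xs then stopped_position m xs else y)"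
  by (auto simp: stopped_position_def reaches_m_first_snoc)

lemma walk_path_inside_before_exit:
  assumes "xs \<in> set_pmf (walk_path m p p' n)" "1 \<le> m"
    and "\<not> reaches_m_first m (rev xs)" "- int m \<notin> set xs"
  shows "\<bar>hd xs\<bar> < int m"
  using assms(1,3,4)
proof (induction n arbitrary: xs)
  case 0
  then show ?case using \<open>1 \<le> m\<close> by simp
next
  case (Suc n)
  then obtain ys b where ys: "ys \<in> set_pmf (walk_path m p p' n)"
    and xs: "xs = (if b then hd ys + 1 else hd ys - 1) # ys"
    by auto
  then have "\<not> reaches_m_first m (rev ys)" "- int m \<notin> set ys" "hd xs \<noteq> int m" "hd xs \<noteq> - int m"
    using Suc.prems by (auto simp: reaches_m_first_snoc)
  with Suc.IH[OF ys] xs show ?case by (cases b) auto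
qed

lemma map_stopped_position_walk_path:
  assumes "1 \<le> m"
  shows "map_pmf (stopped_position m) (walk_path m p p' n) = stopped_walk m p p' n"
proof (induction n)
  case 0
  then show ?case
    using assms by (simp add: stopped_walk_def stopped_position_def reaches_m_first_def)
next
  case (Suc n)
  let ?K = "stopped_kernel {- int m<..<int m} (parrondo_step m p p')"
  have "map_pmf (\<lambda>y. stopped_position m (y # xs)) (parrondo_step m p p' (hd xs))
      = ?K (stopped_position m xs)" if "xs \<in> set_pmf (walk_path m p p' n)" for xs
  proof (cases "reaches_m_first m (rev xs) \<or> - int m \<in> set xs")
    case True
    then have "stopped_position m xs \<in> {int m, - int m}"
      by (auto simp: stopped_position_def)
    with True show ?thesis by (auto simp: stopped_position_Cons stopped_kernel_def)
  next
    case False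
    then have "\<bar>hd xs\<bar> < int m" "stopped_position m xs = hd xs"
      using walk_path_inside_before_exit[OF that assms] by (auto simp: stopped_position_def)
    with False show ?thesis
      by (simp add: stopped_position_Cons stopped_kernel_def abs_less_iff)
  qed
  then have "map_pmf (stopped_position m) (walk_path m p p' (Suc n))
      = bind_pmf (walk_path m p p' n) (\<lambda>xs. ?K (stopped_position m xs))"
    unfolding walk_path_Suc' map_bind_pmf map_pmf_comp by (rule bind_pmf_cong[OF refl])
  also have "\<dots> = stopped_walk m p p' (Suc n)"
    using Suc by (simp add: stopped_walk_def bind_map_pmf[symmetric])
  finally show ?case .
qed

lemma pstar_eq_SUP_stopped_walk:
  assumes "1 \<le> m"
  shows "pstar m p p' = (SUP n. measure_pmf.prob (stopped_walk m p p' n) {int m})"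
  unfolding pstar_def
proof (rule SUP_cong[OF refl])
  fix n
  have "stopped_position m xs = int m \<longleftrightarrow> reaches_m_first m (rev xs)"
    if "xs \<in> set_pmf (walk_path m p p' n)" for xs
    using walk_path_inside_before_exit[OF that assms] assms by (auto simp: stopped_position_def)
  then have "stopped_position m -` {int m} \<inter> set_pmf (walk_path m p p' n)
      = {xs. reaches_m_first m (rev xs)} \<inter> set_pmf (walk_path m p p' n)"
    by auto
  then show "measure_pmf.prob (walk_path m p p' n) {xs. reaches_m_first m (rev xs)}
      = measure_pmf.prob (stopped_walk m p p' n) {int m}"
    by (metis map_stopped_position_walk_path[OF assms] measure_map_pmf measure_Int_set_pmf)
qed

definition parrondo_weight :: "nat \<Rightarrow> real \<Rightarrow> nat \<Rightarrow> real" where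
  "parrondo_weight m p k = (1 - p) ^ k * p ^ (m - 1 - k)"

text \<open>The increments of the scale function (the harmonic function of the walk on [-m, m]),
  indexed by i = x + m: they must satisfy u(x) \<Delta>(x) = (1 - u(x)) \<Delta>(x - 1), so they are
  geometric with ratio (1 - p)/p on each side of 0 and jump by (1 - p')/p' across 0; the
  common factors p' p^(m-1) and (1 - p') (1 - p)^(m-1) make them division-free, since p, p'
  or their complements may vanish.\<close>

definition scale_increment :: "nat \<Rightarrow> real \<Rightarrow> real \<Rightarrow> nat \<Rightarrow> real" where
  "scale_increment m p p' i =
     (if i < m then p' * p ^ (m - 1) * parrondo_weight m p i
      else if i < 2 * m then (1 - p') * (1 - p) ^ (m - 1) * parrondo_weight m p (i - m)
      else 0)"

definition scale :: "nat \<Rightarrow> real \<Rightarrow> real \<Rightarrow> int \<Rightarrow> real" where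
  "scale m p p' x = (\<Sum>i < nat (x + int m). scale_increment m p p' i)"

lemma parrondo_weight_step:
  assumes "0 < k" "k < m"
  shows "p * parrondo_weight m p k = (1 - p) * parrondo_weight m p (k - 1)"
proof -
  obtain j where j: "k = Suc j" using assms(1) gr0_implies_Suc by blast
  have "m - 1 - j = Suc (m - 1 - k)" using assms j by simp
  then show ?thesis by (simp add: parrondo_weight_def j mult_ac)
qed

lemma scale_increment_step:
  fixes p p' :: real
  assumes "1 \<le> i" "i < 2 * m"
  defines "u \<equiv> if i = m then p' else p"
  shows "u * scale_increment m p p' i = (1 - u) * scale_increment m p p' (i - 1)"
proof -
  consider "i < m" | "i = m" | "m < i" by linarith
  then show ?thesis
  proof cases
    case 1
    then have "i - 1 < m" by simp
    with 1 show ?thesis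
      using parrondo_weight_step[of i m p] assms by (simp add: scale_increment_def)
  next
    case 2
    then show ?thesis
      using assms by (simp add: scale_increment_def parrondo_weight_def)
  next
    case 3
    then have "i - 1 - m = i - m - 1" "\<not> i - 1 < m" by auto
    then show ?thesis
      using parrondo_weight_step[of "i - m" m p] assms 3 by (simp add: scale_increment_def)
  qed
qed

lemma up_prob_inside:
  assumes "\<bar>x\<bar> < int m"
  shows "up_prob m p p' x = (if x = 0 then p' else p)"
proof -
  have "int m dvd x \<longleftrightarrow> x = 0"
    using assms dvd_imp_le_int[of x "int m"] by auto
  then show ?thesis by (simp add: up_prob_def)
qed

lemma scale_harmonic:
  assumes "\<bar>x\<bar> < int m"
  shows "up_prob m p p' x * scale m p p' (x + 1) + (1 - up_prob m p p' x) * scale m p p' (x - 1)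
    = scale m p p' x"
proof -
  define i where "i = nat (x + int m)"
  have i: "1 \<le> i" "i < 2 * m" "x = 0 \<longleftrightarrow> i = m" using assms unfolding i_def by linarith+
  have idx: "nat (x + 1 + int m) = Suc i" "nat (x + int m) = Suc (i - 1)"
    "nat (x - 1 + int m) = i - 1"
    using assms unfolding i_def by linarith+
  have "scale m p p' (x + 1) = scale m p p' x + scale_increment m p p' i"
    unfolding scale_def idx(1) by (simp add: i_def)
  moreover have "scale m p p' x = scale m p p' (x - 1) + scale_increment m p p' (i - 1)"
    unfolding scale_def idx(2,3) by simp
  ultimately show ?thesis
    using scale_increment_step[OF i(1,2), of p' p] up_prob_inside[OF assms] i(3)
    by (simp add: algebra_simps)
qed

lemma scale_values:
  fixes m :: nat and p p' :: real
  defines "S \<equiv> (\<Sum>k<m. parrondo_weight m p k)"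
  shows "scale m p p' (- int m) = 0"
    and "scale m p p' 0 = p' * p ^ (m - 1) * S"
    and "scale m p p' (int m) = (p' * p ^ (m - 1) + (1 - p') * (1 - p) ^ (m - 1)) * S"
proof -
  have left: "(\<Sum>i<m. scale_increment m p p' i) = p' * p ^ (m - 1) * S"
    unfolding S_def sum_distrib_left by (rule sum.cong) (simp_all add: scale_increment_def)
  have right: "(\<Sum>i<m. scale_increment m p p' (m + i)) = (1 - p') * (1 - p) ^ (m - 1) * S"
    unfolding S_def sum_distrib_left by (rule sum.cong) (simp_all add: scale_increment_def)
  have "(\<Sum>i<n + k. f i) = (\<Sum>i<n. f i) + (\<Sum>i<k. f (n + i))" for f :: "nat \<Rightarrow> real" and n k
    by (induction k) (simp_all add: ac_simps)
  then have "scale m p p' (int m) = (\<Sum>i<m. scale_increment m p p' i)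
      + (\<Sum>i<m. scale_increment m p p' (m + i))"
    unfolding scale_def nat_int_add by simp
  then show "scale m p p' (int m) = (p' * p ^ (m - 1) + (1 - p') * (1 - p) ^ (m - 1)) * S"
    by (simp only: left right distrib_right)
  show "scale m p p' (- int m) = 0" by (simp add: scale_def)
  show "scale m p p' 0 = p' * p ^ (m - 1) * S" by (simp add: scale_def left)
qed

lemma pmf_parrondo_step:
  assumes "0 \<le> up_prob m p p' x" "up_prob m p p' x \<le> 1"
  shows "pmf (parrondo_step m p p' x) (x + 1) = up_prob m p p' x"
    and "pmf (parrondo_step m p p' x) (x - 1) = 1 - up_prob m p p' x"
proof -
  have "inj (\<lambda>b. if b then x + 1 else x - 1)" by (auto intro: injI split: if_splits)
  from pmf_map_inj'[OF this, of _ True] pmf_map_inj'[OF this, of _ False] assms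
  show "pmf (parrondo_step m p p' x) (x + 1) = up_prob m p p' x"
    and "pmf (parrondo_step m p p' x) (x - 1) = 1 - up_prob m p p' x"
    by (simp_all add: parrondo_step_def)
qed

context
  fixes m :: nat and p p' :: real
  assumes m_pos: "1 \<le> m" and p: "0 \<le> p" "p \<le> 1" and p': "0 \<le> p'" "p' \<le> 1"
begin

lemma up_prob_bounds: "0 \<le> up_prob m p p' x" "up_prob m p p' x \<le> 1"
  using p p' by (simp_all add: up_prob_def)

lemma up_prob_bounded_away:
  assumes "\<bar>p - p'\<bar> < 1"
  obtains c where "0 < c" "(\<forall>x. c \<le> up_prob m p p' x) \<or> (\<forall>x. c \<le> 1 - up_prob m p p' x)"
proof (cases "0 < p \<and> 0 < p'")
  case True
  then show ?thesis by (intro that[of "min p p'"]) (auto simp: up_prob_def)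
next
  case False
  then have "p < 1" "p' < 1" using assms p p' by auto
  then show ?thesis by (intro that[of "min (1 - p) (1 - p')"]) (auto simp: up_prob_def)
qed

lemma parrondo_weight_sum_pos: "0 < (\<Sum>k<m. parrondo_weight m p k)"
proof (cases "p = 0")
  case True
  then show ?thesis using m_pos
    by (intro sum_pos2[where i="m - 1"]) (auto simp: parrondo_weight_def)
next
  case False
  then show ?thesis using m_pos p
    by (intro sum_pos2[where i=0]) (auto simp: parrondo_weight_def)
qed

lemma scale_m_pos:
  assumes "\<bar>p - p'\<bar> < 1"
  shows "0 < scale m p p' (int m)"
proof -
  have "0 < p' * p ^ (m - 1) + (1 - p') * (1 - p) ^ (m - 1)"
  proof (cases "0 < p \<and> 0 < p'")
    case True
    then show ?thesis using p' p by (simp add: add_pos_nonneg)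
  next
    case False
    then have "p < 1" "p' < 1" using assms p p' by auto
    then show ?thesis using p' p by (simp add: add_nonneg_pos)
  qed
  then show ?thesis using parrondo_weight_sum_pos by (simp add: scale_values)
qed

lemma scale_increment_nonneg: "0 \<le> scale_increment m p p' i"
  using p p' by (simp add: scale_increment_def parrondo_weight_def)

lemma scale_nonneg: "0 \<le> scale m p p' x"
  unfolding scale_def by (simp add: sum_nonneg scale_increment_nonneg)

lemma scale_le_scale_m: "scale m p p' x \<le> scale m p p' (int m)"
proof -
  let ?n = "nat (x + int m)"
  have "scale m p p' x \<le> (\<Sum>i < max ?n (2 * m). scale_increment m p p' i)"
    unfolding scale_def by (rule sum_mono2) (auto simp: scale_increment_nonneg)
  also have "\<dots> = (\<Sum>i < 2 * m. scale_increment m p p' i)"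
    by (rule sum.mono_neutral_right) (auto simp: scale_increment_def)
  also have "\<dots> = scale m p p' (int m)"
    by (simp only: scale_def nat_int_add mult_2)
  finally show ?thesis .
qed

lemma integral_parrondo_step_scale:
  "\<bar>x\<bar> < int m \<Longrightarrow> (\<integral>y. scale m p p' y \<partial>parrondo_step m p p' x) = scale m p p' x"
  using scale_harmonic[of x m p p'] by (simp add: parrondo_step_def up_prob_bounds mult.commute)

lemma integral_stopped_walk_scale:
  "(\<integral>y. scale m p p' y \<partial>stopped_walk m p p' n) = scale m p p' 0"
  unfolding stopped_walk_def
  by (rule integral_kernel_pow_stopped_harmonic[where B="scale m p p' (int m)"])
     (auto simp: scale_nonneg scale_le_scale_m integral_parrondo_step_scale abs_less_iff)

lemma set_pmf_stopped_walk: "set_pmf (stopped_walk m p p' n) \<subseteq> {- int m..int m}"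
  unfolding stopped_walk_def
  by (rule set_kernel_pow_subset) (use m_pos in \<open>auto simp: stopped_kernel_def parrondo_step_def\<close>)

lemma prob_stopped_walk_at_m_upper:
  "scale m p p' (int m) * measure_pmf.prob (stopped_walk m p p' n) {int m} \<le> scale m p p' 0"
proof -
  let ?T = "scale m p p' (int m)"
  have "?T * measure_pmf.prob (stopped_walk m p p' n) {int m}
      = (\<integral>y. ?T * indicator {int m} y \<partial>stopped_walk m p p' n)"
    by simp
  also have "\<dots> \<le> (\<integral>y. scale m p p' y \<partial>stopped_walk m p p' n)"
    by (rule integral_mono[OF integrable_measure_pmf_bounded[where B="\<bar>?T\<bar>"]
          integrable_measure_pmf_bounded[where B="?T"]])
       (simp_all add: indicator_def scale_nonneg scale_le_scale_m)
  finally show ?thesis by (simp only: integral_stopped_walk_scale)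
qed

lemma prob_stopped_walk_at_m_lower:
  "scale m p p' 0 \<le> scale m p p' (int m) *
     (measure_pmf.prob (stopped_walk m p p' n) {int m}
      + measure_pmf.prob (stopped_walk m p p' n) {- int m<..<int m})"
proof -
  let ?T = "scale m p p' (int m)" and ?M = "stopped_walk m p p' n"
  let ?A = "{int m} \<union> {- int m<..<int m}"
  have "scale m p p' y \<le> ?T * indicator ?A y" if "y \<in> set_pmf ?M" for y
    using subsetD[OF set_pmf_stopped_walk that] scale_le_scale_m[of y]
    by (cases "y = - int m") (auto simp: indicator_def scale_values)
  then have "(\<integral>y. scale m p p' y \<partial>?M) \<le> (\<integral>y. ?T * indicator ?A y \<partial>?M)"
    by (intro integral_mono_AE[OF integrable_measure_pmf_bounded[where B="?T"]
          integrable_measure_pmf_bounded[where B="\<bar>?T\<bar>"]])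
       (simp_all add: indicator_def scale_nonneg scale_le_scale_m AE_measure_pmf_iff)
  also have "\<dots> = ?T * measure_pmf.prob ?M ?A"
    by simp
  also have "measure_pmf.prob ?M ?A
      = measure_pmf.prob ?M {int m} + measure_pmf.prob ?M {- int m<..<int m}"
    by (rule measure_pmf.finite_measure_Union) auto
  finally show ?thesis by (simp only: integral_stopped_walk_scale)
qed

lemma stopped_walk_leaves:
  assumes "\<bar>p - p'\<bar> < 1"
  obtains d where "0 < d" "d \<le> 1"
    "\<And>x. x \<in> {- int m<..<int m} \<Longrightarrow> d \<le> measure_pmf.prob
       (kernel_pow (stopped_kernel {- int m<..<int m} (parrondo_step m p p')) (2 * m) x)
       (- {- int m<..<int m})"
proof -
  obtain c where c: "0 < c" "(\<forall>x. c \<le> up_prob m p p' x) \<or> (\<forall>x. c \<le> 1 - up_prob m p p' x)"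
    using up_prob_bounded_away[OF assms] .
  then have "c \<le> 1" using up_prob_bounds[of 0] by (auto dest!: spec[where x=0])
  show thesis
  proof (rule that[of "c ^ (2 * m)"])
    show "0 < c ^ (2 * m)" "c ^ (2 * m) \<le> 1" using c \<open>c \<le> 1\<close> by (simp_all add: power_le_one)
    fix x :: int assume x: "x \<in> {- int m<..<int m}"
    from c(2) show "c ^ (2 * m) \<le> measure_pmf.prob
       (kernel_pow (stopped_kernel {- int m<..<int m} (parrondo_step m p p')) (2 * m) x)
       (- {- int m<..<int m})"
    proof
      assume up: "\<forall>x. c \<le> up_prob m p p' x"
      have progress: "\<exists>t. c \<le> pmf (parrondo_step m p p' s) t
          \<and> (t \<in> {- int m<..<int m} \<longrightarrow> nat (int m - 1 - t) < nat (int m - 1 - s))"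
        if "s \<in> {- int m<..<int m}" for s
        by (rule exI[of _ "s + 1"]) (use up that in \<open>auto simp: pmf_parrondo_step up_prob_bounds\<close>)
      show ?thesis
        using c \<open>c \<le> 1\<close> x by (intro prob_kernel_pow_stopped_leave_ge[OF _ _ progress]) auto
    next
      assume down: "\<forall>x. c \<le> 1 - up_prob m p p' x"
      have progress: "\<exists>t. c \<le> pmf (parrondo_step m p p' s) t
          \<and> (t \<in> {- int m<..<int m} \<longrightarrow> nat (t + int m - 1) < nat (s + int m - 1))"
        if "s \<in> {- int m<..<int m}" for s
        by (rule exI[of _ "s - 1"]) (use down that in \<open>auto simp: pmf_parrondo_step up_prob_bounds\<close>)
      show ?thesis
        using c \<open>c \<le> 1\<close> x by (intro prob_kernel_pow_stopped_leave_ge[OF _ _ progress]) auto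
    qed
  qed
qed

lemma SUP_prob_stopped_walk_at_m:
  assumes "\<bar>p - p'\<bar> < 1"
  shows "(SUP n. measure_pmf.prob (stopped_walk m p p' n) {int m})
    = scale m p p' 0 / scale m p p' (int m)"
proof -
  let ?P = "\<lambda>n. measure_pmf.prob (stopped_walk m p p' n) {int m}"
  let ?L = "scale m p p' 0 / scale m p p' (int m)"
  have T: "0 < scale m p p' (int m)" using scale_m_pos[OF assms] .
  have upper: "?P n \<le> ?L" for n
    using prob_stopped_walk_at_m_upper[of n] T by (simp add: pos_le_divide_eq mult.commute)
  have lower: "?L \<le> ?P n + measure_pmf.prob (stopped_walk m p p' n) {- int m<..<int m}" for n
    using prob_stopped_walk_at_m_lower[of n] T by (simp add: pos_divide_le_eq mult.commute)
  show ?thesis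
  proof (rule antisym)
    show "(SUP n. ?P n) \<le> ?L" by (rule cSUP_least) (use upper in auto)
    show "?L \<le> (SUP n. ?P n)"
    proof (rule field_le_epsilon)
      fix e :: real assume "0 < e"
      obtain d where "0 < d" "d \<le> 1"
        "\<And>x. x \<in> {- int m<..<int m} \<Longrightarrow> d \<le> measure_pmf.prob
          (kernel_pow (stopped_kernel {- int m<..<int m} (parrondo_step m p p')) (2 * m) x)
          (- {- int m<..<int m})"
        using stopped_walk_leaves[OF assms] by blast
      from kernel_pow_stopped_leaves_eventually[OF this(1,2) \<open>0 < e\<close> this(3)]
      obtain n where "measure_pmf.prob (stopped_walk m p p' n) {- int m<..<int m} < e"
        unfolding stopped_walk_def by blast
      moreover have "?P n \<le> (SUP n. ?P n)"
        by (rule cSUP_upper) (use upper in \<open>auto intro: bdd_aboveI\<close>)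
      ultimately show "?L \<le> (SUP n. ?P n) + e" using lower[of n] by linarith
    qed
  qed
qed

end

theorem lemma2p1:
  fixes m :: nat and p p' :: real
  assumes "m \<ge> 1"
    and "0 \<le> p" "p \<le> 1" "0 \<le> p'" "p' \<le> 1"
    and "\<bar>p - p'\<bar> < 1"
  shows "pstar m p p' =
    p' * p ^ (m - 1) / (p' * p ^ (m - 1) + (1 - p') * (1 - p) ^ (m - 1))"
proof -
  have "pstar m p p' = (SUP n. measure_pmf.prob (stopped_walk m p p' n) {int m})"
    using assms(1) by (rule pstar_eq_SUP_stopped_walk)
  also have "\<dots> = scale m p p' 0 / scale m p p' (int m)"
    using SUP_prob_stopped_walk_at_m[OF assms] .
  also have "\<dots> = p' * p ^ (m - 1) / (p' * p ^ (m - 1) + (1 - p') * (1 - p) ^ (m - 1))"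
    using parrondo_weight_sum_pos[OF assms(1-5)] by (simp add: scale_values)
  finally show ?thesis .
qed

end
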